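(* (i) We have $$\sum_{k=0}^\infty\frac{(49k+1)8^k}{3^k\binom{3k}k}=81+16\sqrt3\,\pi.$$ (ii) Let $c=\frac32\left((1+\sqrt2)^{1/3}-(1+\sqrt2)^{-1/3}\right)$, so $1/c=1.11843\cdots$. If $n$ is a real number with $n<-1/3$ or $n>1/c$, then $$\sum_{k=0}^\infty\frac{a_nk-b_n}{((1-n)n^2)^k\binom{3k}k}=3n^2(n-1)\left(4\log\left(1-\frac1n\right)-9(3n^2-6n+1)\right),$$ where $$a_n=(3n+1)(3n-2)^2(9n^2-12n+1),\qquad b_n=81n^5-243n^4+189n^3-69n^2+48n-2.$$ In particular, \begin{align*} \sum_{k=0}^\infty\frac{275k-158}{2^k\binom{3k}k}&=6\log2-135,\\ \sum_{k=0}^\infty\frac{728k-17}{(-4)^k\binom{3k}k}&=-54-24\log2,\\ \sum_{k=0}^\infty\frac{(1813k-2707)8^k}{3^k\binom{3k}k}&=9(16\log3-171),\\ \sum_{k=0}^\infty\frac{5635k-1156}{(-18)^k\binom{3k}k}&=54\log\frac23-1215,\\ \sum_{k=0}^\infty\frac{63050k-15959}{(-48)^k\binom{3k}k}&=72\left(4\log\frac34-225\right),\\ \sum_{k=0}^\infty\frac{112216k-30847}{(-100)^k\binom{3k}k}&=300\log\frac45-31050,\\ \sum_{k=0}^\infty\frac{615296k-176777}{(-180)^k\binom{3k}k}&=270\left(4\log\frac56-657\right),\\ \sum_{k=0}^\infty\frac{710809k-209926}{(-294)^k\binom{3k}k}&=441\left(2\log\frac67-477\right),\\ \sum_{k=0}^\infty\frac{2910050k-875807}{(-448)^k\binom{3k}k}&=672\left(4\log\frac78-1305\right),\\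 \sum_{k=0}^\infty\frac{2721250k-830317}{(-648)^k\binom{3k}k}&=972\left(2\log\frac89-855\right),\\ \sum_{k=0}^\infty\frac{9490712k-2926289}{(-900)^k\binom{3k}k}&=1350\left(4\log\frac9{10}-2169\right),\\ \sum_{k=0}^\infty\frac{7825423k-2432776}{(-1210)^k\binom{3k}k}&=1815\left(2\log\frac{10}{11}-1341\right). \end{align*}
   Context: $\log$ is the natural logarithm. *)

theory Defs
  imports Complex_Main
begin

definition cconst :: real where
  "cconst = 3/2 * ((1 + sqrt 2) powr (1/3) - (1 + sqrt 2) powr (-1/3))"

definition a_coef :: "real \<Rightarrow> real" where
  "a_coef n = (3*n + 1) * (3*n - 2)^2 * (9*n^2 - 12*n + 1)"

definition b_coef :: "real \<Rightarrow> real" where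
  "b_coef n = 81*n^5 - 243*n^4 + 189*n^3 - 69*n^2 + 48*n - 2"

end

(* Since 1/((3k+1) C(3k,k)) = B(k+1, 2k+1) is the integral of t^k (1-t)^(2k) over [0,1],
   the series sum_k (A k + B) x^k / C(3k,k) equals the integral over [0,1] of g(x t (1-t)^2),
   where g(u) = sum_k (A k + B) (3k+1) u^k is a rational function of u; summation and
   integration commute by the M-test because 0 <= t (1-t)^2 <= 4/27.
   For x = 1/W with W = (1-n) n^2 the denominator W - t (1-t)^2 factors as
   (1 - n - t) (t^2 - (1+n) t + n^2), and the integrand has an explicit antiderivative
   P(t) / (W - t (1-t)^2)^2 plus logarithms of the two factors. In (i), W = 3/8 comes from
   n = -1/2, where the quadratic factor has no real root and an arctangent replaces its
   logarithm. The condition n < -1/3 or n > 1/c says exactly that |W| > 4/27, c being the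
   real root of 4 c^3 + 27 c = 27 given by Cardano's formula. *)

theory Submission
  imports Defs "HOL-Analysis.Analysis" "HOL-Computational_Algebra.Polynomial"
begin

definition gen_fun :: "real \<Rightarrow> real \<Rightarrow> real \<Rightarrow> real" where
  "gen_fun A B u = A * u * (4 + 2*u) / (1 - u)^3 + B * (1 + 2*u) / (1 - u)^2"

lemma square_times_power_LIMSEQ_zero:
  fixes u :: real
  assumes "\<bar>u\<bar> < 1"
  shows "(\<lambda>N. real N ^ 2 * u ^ N) \<longlonglongrightarrow> 0"
proof -
  define s where "s = sqrt \<bar>u\<bar>"
  have s: "\<bar>s\<bar> < 1" "s\<^sup>2 = \<bar>u\<bar>"
    using assms by (auto simp: s_def real_sqrt_lt_1_iff)
  have "(\<lambda>N. (real N * s ^ N) * (real N * s ^ N)) \<longlonglongrightarrow> 0 * 0"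
    by (intro tendsto_mult powser_times_n_limit_0) (use s in auto)
  moreover have "(real N * s ^ N) * (real N * s ^ N) = \<bar>real N ^ 2 * u ^ N\<bar>" for N
    by (simp add: abs_mult power_abs power2_eq_square flip: s(2) power_mult_distrib)
  ultimately show ?thesis
    by (simp add: tendsto_rabs_zero_iff)
qed

lemma sums_gen_fun:
  fixes A B u :: real
  assumes "\<bar>u\<bar> < 1"
  shows "(\<lambda>k. (A * real k + B) * (3 * real k + 1) * u^k) sums gen_fun A B u"
proof -
  have u: "1 - u \<noteq> 0"
    using assms by auto
  define \<alpha> where "\<alpha> = 3 * A / (1 - u)"
  define \<beta> where "\<beta> = ((A + 3*B) * (1 - u) + 6 * A * u) / (1 - u)^2"
  define G where "G r = \<alpha> * r^2 + \<beta> * r + gen_fun A B u" for r :: real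
  have coeffs: "\<alpha> * (1 - u) = 3 * A" "\<beta> * (1 - u) - 2 * u * \<alpha> = A + 3 * B"
    "gen_fun A B u * (1 - u) - u * \<alpha> - u * \<beta> = B"
    using u by (simp_all add: \<alpha>_def \<beta>_def gen_fun_def field_simps) algebra+
  have step: "G r - u * G (r + 1) = (A * r + B) * (3 * r + 1)" for r
  proof -
    have "G r - u * G (r + 1) = (\<alpha> * (1 - u)) * r^2 + (\<beta> * (1 - u) - 2 * u * \<alpha>) * r
        + (gen_fun A B u * (1 - u) - u * \<alpha> - u * \<beta>)"
      by (simp add: G_def algebra_simps power2_eq_square)
    then show ?thesis
      unfolding coeffs by (simp add: algebra_simps power2_eq_square)
  qed
  have "(\<lambda>N. \<alpha> * (real N ^ 2 * u^N) + \<beta> * (real N * u^N) + gen_fun A B u * u^N) \<longlonglongrightarrow> \<alpha> * 0 + \<beta> * 0 + gen_fun A B u * 0"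
    by (intro tendsto_intros square_times_power_LIMSEQ_zero powser_times_n_limit_0 LIMSEQ_power_zero)
      (use assms in auto)
  then have "(\<lambda>N. G (real N) * u^N) \<longlonglongrightarrow> 0"
    by (simp add: G_def algebra_simps)
  from telescope_sums[OF this]
  have "(\<lambda>k. - (G (real (Suc k)) * u ^ Suc k - G (real k) * u^k)) sums G 0"
    using sums_minus by fastforce
  moreover have "- (G (real (Suc k)) * u ^ Suc k - G (real k) * u^k) = (A * real k + B) * (3 * real k + 1) * u^k" for k
    using step[of "real k"] by (simp add: algebra_simps)
  ultimately show ?thesis
    by (simp add: G_def)
qed

lemma beta_integral_binomial:
  "((\<lambda>t::real. t^k * (1 - t)^(2*k)) has_integral 1 / ((3 * real k + 1) * real ((3*k) choose k))) {0..1}"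
proof -
  have Beta: "Beta (real (k+1)) (real (2*k+1)) = 1 / ((3 * real k + 1) * real ((3*k) choose k))"
  proof -
    have "Gamma (real (k+1)) = fact k" "Gamma (real (2*k+1)) = fact (2*k)"
        "Gamma (real (k+1) + real (2*k+1)) = (3 * real k + 1) * fact (3*k)"
      using Gamma_fact[of k] Gamma_fact[of "2*k"] Gamma_fact[of "3*k+1"]
      by (simp_all add: add.commute fact_Suc)
    moreover have "real ((3*k) choose k) = fact (3*k) / (fact k * fact (2*k))"
      using binomial_fact[of k "3*k", where 'a=real] by simp
    ultimately show ?thesis
      by (simp add: Beta_def)
  qed
  have "((\<lambda>t. t powr (real (k+1) - 1) * (1 - t) powr (real (2*k+1) - 1))
      has_integral Beta (real (k+1)) (real (2*k+1))) {0<..<1}"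
    using has_integral_Beta_real[of "real (k+1)" "real (2*k+1)"]
    by (simp add: has_integral_Icc_iff_Ioo)
  then have "((\<lambda>t::real. t^k * (1 - t)^(2*k)) has_integral Beta (real (k+1)) (real (2*k+1))) {0<..<1}"
  proof (rule has_integral_cong[THEN iffD1, rotated])
    fix t :: real
    assume "t \<in> {0<..<1}"
    then show "t powr (real (k+1) - 1) * (1 - t) powr (real (2*k+1) - 1) = t^k * (1 - t)^(2*k)"
      using powr_realpow[of t k] powr_realpow[of "1 - t" "2*k"] by simp
  qed
  then show ?thesis
    using Beta by (simp add: has_integral_Icc_iff_Ioo)
qed

definition beta_kernel :: "real \<Rightarrow> real" where
  "beta_kernel t = t * (1 - t)^2"

lemma beta_kernel_bounds:
  assumes "t \<in> {0..1}"
  shows "0 \<le> beta_kernel t" "beta_kernel t \<le> 4/27"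
proof -
  have "4/27 - beta_kernel t = (1 - 3*t)^2 * (4 - 3*t) / 27"
    by (simp add: beta_kernel_def algebra_simps power2_eq_square)
  moreover have "(1 - 3*t)^2 * (4 - 3*t) \<ge> 0"
    using assms by (intro mult_nonneg_nonneg) auto
  ultimately show "beta_kernel t \<le> 4/27"
    by linarith
  show "0 \<le> beta_kernel t"
    using assms by (simp add: beta_kernel_def)
qed

lemma abs_scaled_beta_kernel_le:
  assumes "t \<in> {0..1}"
  shows "\<bar>x * beta_kernel t\<bar> \<le> \<bar>x\<bar> * 4/27"
proof -
  have "\<bar>x * beta_kernel t\<bar> = \<bar>x\<bar> * beta_kernel t"
    using beta_kernel_bounds(1)[OF assms] by (simp add: abs_mult)
  also have "\<dots> \<le> \<bar>x\<bar> * (4/27)"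
    using beta_kernel_bounds(2)[OF assms] by (rule mult_left_mono) simp
  finally show ?thesis
    by simp
qed

lemma has_integral_beta_kernel_power:
  "((\<lambda>t. (x * beta_kernel t)^k) has_integral x^k / ((3 * real k + 1) * real ((3*k) choose k))) {0..1}"
proof -
  have "(\<lambda>t. (x * beta_kernel t)^k) = (\<lambda>t. x^k * (t^k * (1 - t)^(2*k)))"
    by (simp add: fun_eq_iff beta_kernel_def power_mult_distrib mult_ac flip: power_mult)
  then show ?thesis
    using has_integral_mult_right[OF beta_integral_binomial[of k], of "x^k"] by simp
qed

lemma uniform_limit_gen_fun_series:
  fixes A B x :: real
  assumes "\<bar>x\<bar> * 4/27 < 1"
  defines "f \<equiv> \<lambda>k t. (A * real k + B) * (3 * real k + 1) * (x * beta_kernel t)^k"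
  shows "uniform_limit {0..1} (\<lambda>N t. \<Sum>k<N. f k t) (\<lambda>t. \<Sum>k. f k t) sequentially"
proof (rule Weierstrass_m_test)
  define r where "r = \<bar>x\<bar> * 4/27"
  have r: "0 \<le> r" "r < 1"
    using assms(1) by (auto simp: r_def)
  show "summable (\<lambda>k. (\<bar>A\<bar> * real k + \<bar>B\<bar>) * (3 * real k + 1) * r^k)"
    using sums_gen_fun[of r "\<bar>A\<bar>" "\<bar>B\<bar>"] r by (auto intro: sums_summable)
  fix k and t :: real
  assume t: "t \<in> {0..1}"
  have "\<bar>x * beta_kernel t\<bar> \<le> r"
    unfolding r_def by (rule abs_scaled_beta_kernel_le[OF t])
  moreover have "\<bar>A * real k + B\<bar> \<le> \<bar>A\<bar> * real k + \<bar>B\<bar>"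
    by (metis abs_mult abs_of_nat abs_triangle_ineq)
  ultimately show "norm (f k t) \<le> (\<bar>A\<bar> * real k + \<bar>B\<bar>) * (3 * real k + 1) * r^k"
    unfolding f_def by (auto simp: abs_mult power_abs intro!: mult_mono power_mono)
qed

lemma sums_binomial_of_integral:
  fixes A B x I :: real
  assumes x: "\<bar>x\<bar> * 4/27 < 1"
    and I: "((\<lambda>t. gen_fun A B (x * beta_kernel t)) has_integral I) {0..1}"
  shows "(\<lambda>k. (A * real k + B) * x^k / real ((3*k) choose k)) sums I"
proof -
  define f where "f = (\<lambda>k t. (A * real k + B) * (3 * real k + 1) * (x * beta_kernel t)^k)"
  have f_integral: "(f k has_integral (A * real k + B) * x^k / real ((3*k) choose k)) {0..1}" for k
  proof -
    have "3 * real k + 1 \<noteq> 0"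
      by linarith
    then show ?thesis
      unfolding f_def using has_integral_mult_right[OF has_integral_beta_kernel_power[of x k],
          of "(A * real k + B) * (3 * real k + 1)"]
      by simp
  qed
  have cont: "continuous_on {0..1} (\<lambda>t. \<Sum>k<N. f k t)" for N
    unfolding f_def beta_kernel_def by (intro continuous_intros)
  have unif: "uniform_limit {0..1} (\<lambda>N t. \<Sum>k<N. f k t) (\<lambda>t. \<Sum>k. f k t) sequentially"
    unfolding f_def by (rule uniform_limit_gen_fun_series[OF x])
  obtain S J where S: "\<And>N. ((\<lambda>t. \<Sum>k<N. f k t) has_integral S N) {0..1}"
    and J: "((\<lambda>t. \<Sum>k. f k t) has_integral J) {0..1}" and "S \<longlonglongrightarrow> J"
    using uniform_limit_integral[OF unif cont] by auto
  moreover have "S = (\<lambda>N. \<Sum>k<N. (A * real k + B) * x^k / real ((3*k) choose k))"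
  proof
    fix N
    have "((\<lambda>t. \<Sum>k<N. f k t) has_integral (\<Sum>k<N. (A * real k + B) * x^k / real ((3*k) choose k))) {0..1}"
      by (intro has_integral_sum f_integral) auto
    then show "S N = (\<Sum>k<N. (A * real k + B) * x^k / real ((3*k) choose k))"
      using S[of N] by (rule has_integral_unique[symmetric])
  qed
  moreover have "(\<lambda>k. f k t) sums gen_fun A B (x * beta_kernel t)" if "t \<in> {0..1}" for t
  proof -
    have "\<bar>x * beta_kernel t\<bar> < 1"
      using abs_scaled_beta_kernel_le[OF that, of x] x by linarith
    then show ?thesis
      unfolding f_def by (rule sums_gen_fun)
  qed
  then have "J = I"
    using J I has_integral_cong[of "{0..1}" "\<lambda>t. \<Sum>k. f k t"]
    by (metis has_integral_unique sums_unique)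
  ultimately show ?thesis
    unfolding sums_def by simp
qed

lemma gen_fun_ratio:
  fixes A B W T :: real
  assumes "W \<noteq> 0" "W - T \<noteq> 0"
  shows "gen_fun A B (T / W) = W * (A * T * (4*W + 2*T) + B * (W + 2*T) * (W - T)) / (W - T)^3"
proof -
  have "1 - T / W = (W - T) / W"
    using assms(1) by (simp add: field_simps)
  then show ?thesis
    using assms unfolding gen_fun_def by (simp add: power_divide field_simps) algebra
qed

lemma has_real_derivative_beta_kernel: "(beta_kernel has_real_derivative (1 - t) * (1 - 3*t)) (at t)"
  unfolding beta_kernel_def by (auto intro!: derivative_eq_intros simp: algebra_simps power2_eq_square)

lemma antiderivative_gen_fun:
  fixes p :: "real poly" and L :: "real \<Rightarrow> real"
  assumes "W \<noteq> 0" "beta_kernel t \<noteq> W" "(L has_real_derivative L') (at t)"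
    and "poly (pderiv p) t * (W - beta_kernel t) + 2 * poly p t * (1 - t) * (1 - 3*t)
        + L' * (W - beta_kernel t)^3
      = W * (A * beta_kernel t * (4*W + 2 * beta_kernel t) + B * (W + 2 * beta_kernel t) * (W - beta_kernel t))"
  shows "((\<lambda>s. poly p s / (W - beta_kernel s)^2 + L s) has_real_derivative gen_fun A B (beta_kernel t / W)) (at t)"
proof -
  define D where "D = W - beta_kernel t"
  have D: "D \<noteq> 0"
    using assms(2) by (simp add: D_def)
  have "((\<lambda>s. (W - beta_kernel s)^2) has_real_derivative 2 * D * - ((1 - t) * (1 - 3*t))) (at t)"
    unfolding D_def by (auto intro!: derivative_eq_intros has_real_derivative_beta_kernel)
  from DERIV_add[OF DERIV_divide[OF poly_DERIV this] assms(3)]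
  have "((\<lambda>s. poly p s / (W - beta_kernel s)^2 + L s) has_real_derivative
      (poly (pderiv p) t * D^2 - poly p t * (2 * D * - ((1 - t) * (1 - 3*t)))) / (D^2 * D^2) + L') (at t)"
    using D by (simp add: D_def)
  moreover have "(poly (pderiv p) t * D^2 - poly p t * (2 * D * - ((1 - t) * (1 - 3*t)))) / (D^2 * D^2) + L'
      = (poly (pderiv p) t * D + 2 * poly p t * (1 - t) * (1 - 3*t) + L' * D^3) / D^3"
    using D by (simp add: field_simps power2_eq_square power3_eq_cube)
  ultimately show ?thesis
    using assms(4) gen_fun_ratio[OF assms(1)] D by (simp add: D_def)
qed

lemma sums_binomial_antiderivative:
  fixes p :: "real poly" and L L' :: "real \<Rightarrow> real"
  assumes W: "\<bar>W\<bar> > 4/27"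
    and L: "\<And>t. t \<in> {0..1} \<Longrightarrow> (L has_real_derivative L' t) (at t)"
    and key: "\<And>t. t \<in> {0..1} \<Longrightarrow>
      poly (pderiv p) t * (W - beta_kernel t) + 2 * poly p t * (1 - t) * (1 - 3*t)
        + L' t * (W - beta_kernel t)^3
      = W * (A * beta_kernel t * (4*W + 2 * beta_kernel t) + B * (W + 2 * beta_kernel t) * (W - beta_kernel t))"
  shows "(\<lambda>k. (A * real k + B) / (W^k * real ((3*k) choose k))) sums ((poly p 1 - poly p 0) / W^2 + L 1 - L 0)"
proof -
  define F where "F s = poly p s / (W - beta_kernel s)^2 + L s" for s
  have W0: "W \<noteq> 0"
    using W by auto
  have "(F has_real_derivative gen_fun A B ((1/W) * beta_kernel t)) (at t)" if "t \<in> {0..1}" for t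
  proof -
    have "beta_kernel t \<noteq> W"
      using beta_kernel_bounds[OF that] W by auto
    then show ?thesis
      unfolding F_def using antiderivative_gen_fun[OF W0 _ L[OF that] key[OF that]] by simp
  qed
  then have "((\<lambda>t. gen_fun A B ((1/W) * beta_kernel t)) has_integral F 1 - F 0) {0..1}"
    by (intro fundamental_theorem_of_calculus)
      (auto simp: has_real_derivative_iff_has_vector_derivative[symmetric] intro: has_field_derivative_at_within)
  moreover have "\<bar>1/W\<bar> * 4/27 < 1"
    using W by (simp add: field_simps abs_divide)
  ultimately have "(\<lambda>k. (A * real k + B) * (1/W)^k / real ((3*k) choose k)) sums (F 1 - F 0)"
    by (intro sums_binomial_of_integral)
  moreover have "F 1 - F 0 = (poly p 1 - poly p 0) / W^2 + L 1 - L 0"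
    by (simp add: F_def beta_kernel_def diff_divide_distrib)
  ultimately show ?thesis
    by (simp add: power_one_over)
qed

lemma cconst_root: "0 < cconst" "4 * cconst^3 + 27 * cconst = 27"
proof -
  define s where "s = (1 + sqrt 2) powr (1/3)"
  have "0 < 1 + sqrt (2::real)"
    by (simp add: add_pos_nonneg)
  then have s: "0 < s" "s^3 = 1 + sqrt 2"
    using powr_realpow[of s 3] by (simp_all add: s_def powr_powr)
  have "s > 1"
  proof (rule ccontr)
    assume "\<not> s > 1"
    then have "s^3 \<le> 1"
      using s(1) by (simp add: power_le_one)
    then show False
      using s(2) by simp
  qed
  have "(1/s)^3 = 1 / (1 + sqrt 2)"
    using s(2) by (simp add: power_one_over)
  also have "\<dots> = sqrt 2 - 1"
    using \<open>0 < 1 + sqrt 2\<close> by (subst nonzero_divide_eq_eq) (auto simp: algebra_simps)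
  finally have s3_inv: "(1/s)^3 = sqrt 2 - 1" .
  define d where "d = s - 1/s"
  have c: "cconst = 3/2 * d"
    unfolding cconst_def s_def d_def using powr_minus_divide[of "1 + sqrt 2" "1/3"] by simp
  have "1/s < s"
    using \<open>s > 1\<close> by (smt (verit) divide_less_eq_1_pos)
  then show "0 < cconst"
    by (simp add: c d_def)
  have cube: "(s - v)^3 + 3 * (s - v) = s^3 - v^3" if "s * v = 1" for v
    using that by algebra
  have "d^3 + 3 * d = 2"
    using cube[of "1/s"] s s3_inv by (simp add: d_def)
  moreover have "4 * cconst^3 + 27 * cconst = 27/2 * (d^3 + 3 * d)"
    unfolding c by (simp add: power_mult_distrib field_simps)
  ultimately show "4 * cconst^3 + 27 * cconst = 27"
    by simp
qed

lemma cconst_bounds: "1/2 < cconst" "cconst < 1"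
proof -
  show "1/2 < cconst"
  proof (rule ccontr)
    assume "\<not> 1/2 < cconst"
    then have "cconst^3 \<le> (1/2)^3"
      using cconst_root(1) by (intro power_mono) auto
    then show False
      using cconst_root(2) \<open>\<not> 1/2 < cconst\<close> by (simp add: power_divide)
  qed
  show "cconst < 1"
  proof (rule ccontr)
    assume "\<not> cconst < 1"
    then have "1 \<le> cconst^3"
      by simp
    then show False
      using cconst_root(2) \<open>\<not> cconst < 1\<close> by linarith
  qed
qed

lemma inverse_cconst_bounds: "1 < 1/cconst" "1/cconst < 2"
  using cconst_root(1) cconst_bounds by (simp_all add: field_simps)

lemma abs_base_gt:
  assumes "n < -1/3 \<or> n > 1/cconst"
  shows "4/27 < \<bar>(1 - n) * n^2\<bar>"
proof (cases "n < -1/3")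
  case True
  have "(1 - n) * n^2 - 4/27 = - (n + 1/3) * (n - 2/3)^2"
    by (simp add: field_simps power2_eq_square)
  moreover have "- (n + 1/3) * (n - 2/3)^2 > 0"
    using True by (intro mult_pos_pos) auto
  ultimately show ?thesis
    by linarith
next
  case False
  then have "1/cconst < n"
    using assms by auto
  moreover from this have "1 < n"
    using inverse_cconst_bounds(1) by linarith
  ultimately have n: "1 < n" "1/n < cconst"
    using cconst_root(1) by (simp_all add: divide_less_eq less_divide_eq mult.commute)
  then have "4 * (1/n)^3 + 27 * (1/n) < 27"
    using cconst_root(2) power_strict_mono[of "1/n" cconst 3] by simp
  then have "4/27 < n^3 - n^2"
    using n(1) by (simp add: field_simps power3_eq_cube power2_eq_square)
  moreover have "(1 - n) * n^2 = - (n^3 - n^2)"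
    by (simp add: algebra_simps power2_eq_square power3_eq_cube)
  ultimately show ?thesis
    by linarith
qed

lemma base_minus_beta_kernel:
  "(1 - n) * n^2 - beta_kernel t = ((1 - n) - t) * (t^2 - (1 + n) * t + n^2)"
  unfolding beta_kernel_def by algebra

lemma quadratic_factor_pos:
  fixes n t :: real
  assumes "n < -1/3 \<or> n > 1"
  shows "0 < t^2 - (1 + n) * t + n^2"
proof -
  have "4 * (t^2 - (1 + n) * t + n^2) = (2*t - (1 + n))^2 + (n - 1) * (3*n + 1)"
    by (simp add: algebra_simps power2_eq_square)
  moreover have "(n - 1) * (3*n + 1) > 0"
    using assms by (auto intro: mult_pos_pos mult_neg_neg)
  ultimately show ?thesis
    by (smt (verit) zero_le_power2)
qed

definition num_poly :: "real \<Rightarrow> real poly" where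
  "num_poly n = [: -18*n^6 + 162*n^7 - 432*n^8 + 504*n^9 - 270*n^10 + 54*n^11,
     34*n^4 - 332*n^5 + 751*n^6 - 831*n^7 + 810*n^8 - 756*n^9 + 405*n^10 - 81*n^11,
     -4*n^2 + 16*n^3 - 136*n^4 + 1322*n^5 - 2974*n^6 + 2478*n^7 - 702*n^8,
     12*n^2 - 48*n^3 + 180*n^4 - 1584*n^5 + 3600*n^6 - 3024*n^7 + 864*n^8,
     -12*n^2 + 48*n^3 - 90*n^4 + 594*n^5 - 1350*n^6 + 1134*n^7 - 324*n^8,
     4*n^2 - 16*n^3 + 12*n^4 :]"

lemma num_poly_key_identity:
  fixes n t :: real
  defines "W \<equiv> (1 - n) * n^2" and "T \<equiv> beta_kernel t" and "Q \<equiv> t^2 - (1 + n) * t + n^2"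
  shows "poly (pderiv (num_poly n)) t * (W - T) + 2 * poly (num_poly n) t * (1 - t) * (1 - 3*t)
      - 4 * W * (2 * Q - (t - (1 - n)) * (2*t - (1 + n))) * (W - T)^2
    = W * (a_coef n * T * (4*W + 2*T) - b_coef n * (W + 2*T) * (W - T))"
  unfolding W_def T_def Q_def beta_kernel_def num_poly_def a_coef_def b_coef_def
  by (simp add: pderiv_pCons) algebra

lemma num_poly_log_identity:
  fixes n t :: real
  defines "W \<equiv> (1 - n) * n^2" and "Q \<equiv> t^2 - (1 + n) * t + n^2"
  assumes "t - (1 - n) \<noteq> 0" "Q \<noteq> 0"
  shows "poly (pderiv (num_poly n)) t * (W - beta_kernel t) + 2 * poly (num_poly n) t * (1 - t) * (1 - 3*t)
      + 4 * W * (2 / (t - (1 - n)) - (2 * t - (1 + n)) / Q) * (W - beta_kernel t)^3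
    = W * (a_coef n * beta_kernel t * (4*W + 2 * beta_kernel t)
        + - b_coef n * (W + 2 * beta_kernel t) * (W - beta_kernel t))"
proof -
  have D: "W - beta_kernel t = - (t - (1 - n)) * Q"
    unfolding W_def Q_def base_minus_beta_kernel by simp
  have cancel: "4 * W * (2 / y - q' / q) * (- y * q)^3 = - 4 * W * (2 * q - y * q') * (- y * q)^2"
    if "y \<noteq> 0" "q \<noteq> 0" for y q q' :: real
    using that by (simp add: field_simps power2_eq_square power3_eq_cube)
  have "4 * W * (2 / (t - (1 - n)) - (2 * t - (1 + n)) / Q) * (W - beta_kernel t)^3
      = - 4 * W * (2 * Q - (t - (1 - n)) * (2 * t - (1 + n))) * (W - beta_kernel t)^2"
    unfolding D by (rule cancel) (use assms in auto)
  then show ?thesis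
    using num_poly_key_identity[of n t, folded W_def Q_def] by (simp add: algebra_simps)
qed

lemma num_poly_boundary:
  "poly (num_poly n) 1 - poly (num_poly n) 0 = 27 * ((1 - n) * n^2)^3 * (3*n^2 - 6*n + 1)"
  unfolding num_poly_def by simp algebra

lemma has_real_derivative_ln_square:
  fixes c t :: real
  assumes "t \<noteq> c"
  shows "((\<lambda>x. ln ((x - c)^2)) has_real_derivative 2 / (t - c)) (at t)"
proof -
  have "0 < (t - c)^2"
    using assms by simp
  then have "((\<lambda>x. ln ((x - c)^2)) has_real_derivative 1 / (t - c)^2 * (2 * (t - c))) (at t)"
    by (intro DERIV_chain2[OF DERIV_ln_divide]) (auto intro!: derivative_eq_intros)
  moreover have "1 / y^2 * (2 * y) = 2 / y" for y :: real
    by (simp add: power2_eq_square)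
  ultimately show ?thesis
    by metis
qed

lemma ln_boundary_values:
  fixes n :: real
  assumes "n < -1/3 \<or> n > 1"
  shows "ln (n^2) - ln (n^2 - n) - (ln ((n - 1)^2) - ln (n^2)) = - 3 * ln (1 - 1/n)"
proof -
  have "n \<noteq> 0" "0 < 1 - 1/n"
    using assms by (auto simp: field_simps)
  moreover have "n^2 - n = n^2 * (1 - 1/n)" "(n - 1)^2 = n^2 * (1 - 1/n)^2"
    using \<open>n \<noteq> 0\<close> by (simp_all add: field_simps power2_eq_square)
  ultimately show ?thesis
    by (simp add: ln_mult ln_realpow)
qed

lemma sums_binomial_log:
  fixes n :: real
  assumes n: "n < -1/3 \<or> n > 1/cconst"
  shows "(\<lambda>k. (a_coef n * real k - b_coef n) / (((1 - n) * n^2)^k * real ((3*k) choose k)))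
    sums (3 * n^2 * (n - 1) * (4 * ln (1 - 1/n) - 9 * (3*n^2 - 6*n + 1)))"
proof -
  define W where "W = (1 - n) * n^2"
  define Q where "Q x = x^2 - (1 + n) * x + n^2" for x
  define L where "L x = 4 * W * (ln ((x - (1 - n))^2) - ln (Q x))" for x
  define L' where "L' x = 4 * W * (2 / (x - (1 - n)) - (2 * x - (1 + n)) / Q x)" for x
  have n': "n < -1/3 \<or> n > 1"
    using n inverse_cconst_bounds(1) by linarith
  have W: "4/27 < \<bar>W\<bar>"
    unfolding W_def by (rule abs_base_gt[OF n])
  have Q: "0 < Q t" for t
    unfolding Q_def by (rule quadratic_factor_pos[OF n'])
  have pole: "t - (1 - n) \<noteq> 0" if "t \<in> {0..1}" for t
    using n' that by auto
  have "(\<lambda>k. (a_coef n * real k + - b_coef n) / (W^k * real ((3*k) choose k)))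
      sums ((poly (num_poly n) 1 - poly (num_poly n) 0) / W^2 + L 1 - L 0)"
  proof (rule sums_binomial_antiderivative[OF W])
    fix t :: real
    assume t: "t \<in> {0..1}"
    have "((\<lambda>x. ln ((x - (1 - n))^2)) has_real_derivative 2 / (t - (1 - n))) (at t)"
      using pole[OF t] by (intro has_real_derivative_ln_square) simp
    moreover have "((\<lambda>x. ln (Q x)) has_real_derivative (2 * t - (1 + n)) / Q t) (at t)"
      using Q[of t] unfolding Q_def by (auto intro!: derivative_eq_intros)
    ultimately show "(L has_real_derivative L' t) (at t)"
      unfolding L_def L'_def by (intro DERIV_cmult DERIV_diff)
    show "poly (pderiv (num_poly n)) t * (W - beta_kernel t) + 2 * poly (num_poly n) t * (1 - t) * (1 - 3*t)
        + L' t * (W - beta_kernel t)^3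
      = W * (a_coef n * beta_kernel t * (4*W + 2 * beta_kernel t)
          + - b_coef n * (W + 2 * beta_kernel t) * (W - beta_kernel t))"
      unfolding L'_def Q_def W_def using pole[OF t] Q[of t, unfolded Q_def]
      by (intro num_poly_log_identity) auto
  qed
  moreover have "(poly (num_poly n) 1 - poly (num_poly n) 0) / W^2 + L 1 - L 0
      = 3 * n^2 * (n - 1) * (4 * ln (1 - 1/n) - 9 * (3*n^2 - 6*n + 1))"
  proof -
    have "L 1 - L 0 = 4 * W * (ln (n^2) - ln (n^2 - n) - (ln ((n - 1)^2) - ln (n^2)))"
      by (simp add: L_def Q_def algebra_simps)
    also have "\<dots> = - 12 * W * ln (1 - 1/n)"
      unfolding ln_boundary_values[OF n'] by simp
    finally have L: "L 1 - L 0 = - 12 * W * ln (1 - 1/n)" .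
    have P: "(poly (num_poly n) 1 - poly (num_poly n) 0) / W^2 = 27 * W * (3*n^2 - 6*n + 1)"
      using W unfolding num_poly_boundary W_def[symmetric] by (simp add: power2_eq_square power3_eq_cube)
    show ?thesis
      unfolding add_diff_eq[symmetric] L P by (simp add: W_def algebra_simps)
  qed
  ultimately show ?thesis
    by (simp add: W_def)
qed

definition pi_poly :: "real poly" where
  "pi_poly = [: -243/32, 1737/64, -159/4, 72, -72, 24 :]"

lemma pi_poly_key_identity:
  fixes t :: real
  defines "W \<equiv> 3/8" and "T \<equiv> beta_kernel t"
  shows "poly (pderiv pi_poly) t * (W - T) + 2 * poly pi_poly t * (1 - t) * (1 - 3*t)
      + 24 * (3/2 - t) * (W - T)^2
    = W * (49 * T * (4*W + 2*T) + (W + 2*T) * (W - T))"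
  unfolding W_def T_def beta_kernel_def pi_poly_def
  by (simp add: pderiv_pCons) algebra

lemma pi_poly_arctan_identity:
  fixes t :: real
  defines "Q \<equiv> t^2 - t/2 + 1/4"
  shows "poly (pderiv pi_poly) t * (3/8 - beta_kernel t) + 2 * poly pi_poly t * (1 - t) * (1 - 3*t)
      + 24 / Q * (3/8 - beta_kernel t)^3
    = 3/8 * (49 * beta_kernel t * (4 * (3/8) + 2 * beta_kernel t)
        + 1 * (3/8 + 2 * beta_kernel t) * (3/8 - beta_kernel t))"
proof -
  have D: "3/8 - beta_kernel t = (3/2 - t) * Q"
    unfolding Q_def beta_kernel_def by (simp add: field_simps power2_eq_square)
  have Q_sq: "Q = ((4 * t - 1)^2 + 3) / 16"
    by (simp add: Q_def power2_eq_square field_simps)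
  have "0 < Q"
    unfolding Q_sq by (simp add: add_nonneg_pos)
  have cancel: "24 / q * (y * q)^3 = 24 * y * (y * q)^2" if "q \<noteq> 0" for y q :: real
    using that by (simp add: power2_eq_square power3_eq_cube)
  have "24 / Q * (3/8 - beta_kernel t)^3 = 24 * (3/2 - t) * (3/8 - beta_kernel t)^2"
    unfolding D by (rule cancel) (use \<open>0 < Q\<close> in auto)
  then show ?thesis
    using pi_poly_key_identity[of t] by simp
qed

lemma has_real_derivative_arctan_quadratic:
  "((\<lambda>x. arctan ((4 * x - 1) / sqrt 3)) has_real_derivative sqrt 3 / (4 * (t^2 - t/2 + 1/4))) (at t)"
proof -
  have "((\<lambda>x. (4 * x - 1) / sqrt 3) has_real_derivative 4 / sqrt 3) (at t)"
    by (rule DERIV_cdivide) (auto intro!: derivative_eq_intros)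
  then have deriv: "((\<lambda>x. arctan ((4 * x - 1) / sqrt 3)) has_real_derivative
      inverse (1 + ((4 * t - 1) / sqrt 3)^2) * (4 / sqrt 3)) (at t)"
    by (rule DERIV_chain2[OF DERIV_arctan])
  have arg: "1 + ((4 * t - 1) / sqrt 3)^2 = 16 * (t^2 - t/2 + 1/4) / 3"
    by (simp add: power_divide power2_eq_square field_simps)
  have const: "inverse (16 * q / 3) * (4 / sqrt 3) = sqrt 3 / (4 * q)" for q :: real
    by (cases "q = 0") (simp_all add: field_simps)
  show ?thesis
    using deriv unfolding arg const .
qed

lemma arctan_sqrt3_diff: "arctan (sqrt 3) - arctan (- (1 / sqrt 3)) = pi / 2"
  using arctan_tan[of "pi/3"] arctan_tan[of "pi/6"] tan_60 tan_30 arctan_minus[of "1 / sqrt 3"]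
  by simp

lemma sums_binomial_pi:
  "(\<lambda>k. (49 * real k + 1) * 8^k / (3^k * real ((3*k) choose k))) sums (81 + 16 * sqrt 3 * pi)"
proof -
  define Q where "Q x = x^2 - x/2 + 1/4" for x :: real
  define L where "L x = 32 * sqrt 3 * arctan ((4 * x - 1) / sqrt 3)" for x
  have "(\<lambda>k. (49 * real k + 1) / ((3/8)^k * real ((3*k) choose k)))
      sums ((poly pi_poly 1 - poly pi_poly 0) / (3/8)^2 + L 1 - L 0)"
  proof (rule sums_binomial_antiderivative[where L' = "\<lambda>x. 24 / Q x"])
    fix t :: real
    have "(L has_real_derivative 32 * sqrt 3 * (sqrt 3 / (4 * Q t))) (at t)"
      unfolding L_def Q_def by (intro DERIV_cmult has_real_derivative_arctan_quadratic)
    then show "(L has_real_derivative 24 / Q t) (at t)"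
      by simp
    show "poly (pderiv pi_poly) t * (3/8 - beta_kernel t) + 2 * poly pi_poly t * (1 - t) * (1 - 3*t)
        + 24 / Q t * (3/8 - beta_kernel t)^3
      = 3/8 * (49 * beta_kernel t * (4 * (3/8) + 2 * beta_kernel t)
          + 1 * (3/8 + 2 * beta_kernel t) * (3/8 - beta_kernel t))"
      unfolding Q_def by (rule pi_poly_arctan_identity)
  qed simp
  moreover have "L 1 - L 0 = 16 * sqrt 3 * pi"
  proof -
    have "(4 * 1 - 1) / sqrt 3 = sqrt (3::real)" "(4 * 0 - 1) / sqrt 3 = - (1 / sqrt (3::real))"
      using real_div_sqrt[of 3] by simp_all
    then have "L 1 - L 0 = 32 * sqrt 3 * (arctan (sqrt 3) - arctan (- (1 / sqrt 3)))"
      unfolding L_def by (simp add: algebra_simps)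
    then show ?thesis
      unfolding arctan_sqrt3_diff by simp
  qed
  moreover have "(49 * real k + 1) / ((3/8)^k * real ((3*k) choose k))
      = (49 * real k + 1) * 8^k / (3^k * real ((3*k) choose k))" for k
    by (simp add: power_divide)
  ultimately show ?thesis
    by (simp add: pi_poly_def power2_eq_square flip: add_diff_eq)
qed

lemma sums_binomial_log_scaled:
  fixes n c A B q V :: real
  assumes "n < -1/3 \<or> n > 1/cconst" "c \<noteq> 0"
    and "a_coef n = c * A" "b_coef n = c * B" "(1 - n) * n^2 = q"
    and "3 * n^2 * (n - 1) * (4 * ln (1 - 1/n) - 9 * (3*n^2 - 6*n + 1)) = c * V"
  shows "(\<lambda>k. (A * real k - B) / (q^k * real ((3*k) choose k))) sums V"
proof -
  have "(\<lambda>k. (a_coef n * real k - b_coef n) / (((1 - n) * n^2)^k * real ((3*k) choose k)) / c) sums (c * V / c)"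
    using sums_divide[OF sums_binomial_log[OF assms(1)], of c] unfolding assms(6) .
  moreover have "(a_coef n * real k - b_coef n) / (((1 - n) * n^2)^k * real ((3*k) choose k)) / c
      = (A * real k - B) / (q^k * real ((3*k) choose k))" for k
  proof -
    have "c * A * real k - c * B = c * (A * real k - B)"
      by (simp add: algebra_simps)
    moreover have "c * Z / Y / c = Z / Y" for Y Z :: real
      using assms(2) by (cases "Y = 0") (simp_all add: field_simps)
    ultimately show ?thesis
      unfolding assms(3-5) by simp
  qed
  ultimately show ?thesis
    using assms(2) by simp
qed

lemma sums_binomial_log_special_values:
  shows "(\<lambda>k::nat. (275 * real k - 158) / (2^k * real ((3*k) choose k))) sums (6 * ln 2 - 135)"
    and "(\<lambda>k::nat. (728 * real k - 17) / ((-4)^k * real ((3*k) choose k))) sums (-54 - 24 * ln 2)"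
    and "(\<lambda>k::nat. (1813 * real k - 2707) * 8^k / (3^k * real ((3*k) choose k))) sums (9 * (16 * ln 3 - 171))"
    and "(\<lambda>k::nat. (5635 * real k - 1156) / ((-18)^k * real ((3*k) choose k))) sums (54 * ln (2/3) - 1215)"
    and "(\<lambda>k::nat. (63050 * real k - 15959) / ((-48)^k * real ((3*k) choose k))) sums (72 * (4 * ln (3/4) - 225))"
    and "(\<lambda>k::nat. (112216 * real k - 30847) / ((-100)^k * real ((3*k) choose k))) sums (300 * ln (4/5) - 31050)"
    and "(\<lambda>k::nat. (615296 * real k - 176777) / ((-180)^k * real ((3*k) choose k))) sums (270 * (4 * ln (5/6) - 657))"
    and "(\<lambda>k::nat. (710809 * real k - 209926) / ((-294)^k * real ((3*k) choose k))) sums (441 * (2 * ln (6/7) - 477))"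
    and "(\<lambda>k::nat. (2910050 * real k - 875807) / ((-448)^k * real ((3*k) choose k))) sums (672 * (4 * ln (7/8) - 1305))"
    and "(\<lambda>k::nat. (2721250 * real k - 830317) / ((-648)^k * real ((3*k) choose k))) sums (972 * (2 * ln (8/9) - 855))"
    and "(\<lambda>k::nat. (9490712 * real k - 2926289) / ((-900)^k * real ((3*k) choose k))) sums (1350 * (4 * ln (9/10) - 2169))"
    and "(\<lambda>k::nat. (7825423 * real k - 2432776) / ((-1210)^k * real ((3*k) choose k))) sums (1815 * (2 * ln (10/11) - 1341))"
proof -
  have n: "n \<ge> 2 \<Longrightarrow> n > 1/cconst" for n :: real
    using inverse_cconst_bounds(2) by linarith
  note scaled = sums_binomial_log_scaled[unfolded a_coef_def b_coef_def]
  show "(\<lambda>k::nat. (275 * real k - 158) / (2^k * real ((3*k) choose k))) sums (6 * ln 2 - 135)"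
    by (rule scaled[where n = "-1" and c = "-4"]) (simp_all add: field_simps)
  show "(\<lambda>k::nat. (728 * real k - 17) / ((-4)^k * real ((3*k) choose k))) sums (-54 - 24 * ln 2)"
    by (rule scaled[where n = 2 and c = 2]) (simp_all add: n ln_div)
  have "(\<lambda>k::nat. (1813 * real k - 2707) / ((3/8)^k * real ((3*k) choose k))) sums (9 * (16 * ln 3 - 171))"
    by (rule scaled[where n = "-1/2" and c = "-1/32"]) (simp_all add: field_simps power_divide)
  then show "(\<lambda>k::nat. (1813 * real k - 2707) * 8^k / (3^k * real ((3*k) choose k))) sums (9 * (16 * ln 3 - 171))"
    by (simp add: power_divide)
  show "(\<lambda>k::nat. (5635 * real k - 1156) / ((-18)^k * real ((3*k) choose k))) sums (54 * ln (2/3) - 1215)"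
    by (rule scaled[where n = 3 and c = 4]) (simp_all add: n)
  show "(\<lambda>k::nat. (63050 * real k - 15959) / ((-48)^k * real ((3*k) choose k))) sums (72 * (4 * ln (3/4) - 225))"
    by (rule scaled[where n = 4 and c = 2]) (simp_all add: n)
  show "(\<lambda>k::nat. (112216 * real k - 30847) / ((-100)^k * real ((3*k) choose k))) sums (300 * ln (4/5) - 31050)"
    by (rule scaled[where n = 5 and c = 4]) (simp_all add: n)
  show "(\<lambda>k::nat. (615296 * real k - 176777) / ((-180)^k * real ((3*k) choose k))) sums (270 * (4 * ln (5/6) - 657))"
    by (rule scaled[where n = 6 and c = 2]) (simp_all add: n)
  show "(\<lambda>k::nat. (710809 * real k - 209926) / ((-294)^k * real ((3*k) choose k))) sums (441 * (2 * ln (6/7) - 477))"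
    by (rule scaled[where n = 7 and c = 4]) (simp_all add: n)
  show "(\<lambda>k::nat. (2910050 * real k - 875807) / ((-448)^k * real ((3*k) choose k))) sums (672 * (4 * ln (7/8) - 1305))"
    by (rule scaled[where n = 8 and c = 2]) (simp_all add: n)
  show "(\<lambda>k::nat. (2721250 * real k - 830317) / ((-648)^k * real ((3*k) choose k))) sums (972 * (2 * ln (8/9) - 855))"
    by (rule scaled[where n = 9 and c = 4]) (simp_all add: n)
  show "(\<lambda>k::nat. (9490712 * real k - 2926289) / ((-900)^k * real ((3*k) choose k))) sums (1350 * (4 * ln (9/10) - 2169))"
    by (rule scaled[where n = 10 and c = 2]) (simp_all add: n)
  show "(\<lambda>k::nat. (7825423 * real k - 2432776) / ((-1210)^k * real ((3*k) choose k))) sums (1815 * (2 * ln (10/11) - 1341))"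
    by (rule scaled[where n = 11 and c = 4]) (simp_all add: n)
qed

theorem corollary1p1:
  shows "((\<lambda>k::nat. (49 * real k + 1) * 8^k / (3^k * real ((3*k) choose k)))
            sums (81 + 16 * sqrt 3 * pi))
    \<and> (\<forall>n::real. (n < -1/3 \<or> n > 1 / cconst) \<longrightarrow>
        ((\<lambda>k::nat. (a_coef n * real k - b_coef n) / (((1 - n) * n^2)^k * real ((3*k) choose k)))
          sums (3 * n^2 * (n - 1) * (4 * ln (1 - 1/n) - 9 * (3*n^2 - 6*n + 1)))))
    \<and> ((\<lambda>k::nat. (275 * real k - 158) / (2^k * real ((3*k) choose k)))
          sums (6 * ln 2 - 135))
    \<and> ((\<lambda>k::nat. (728 * real k - 17) / ((-4)^k * real ((3*k) choose k)))
          sums (-54 - 24 * ln 2))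
    \<and> ((\<lambda>k::nat. (1813 * real k - 2707) * 8^k / (3^k * real ((3*k) choose k)))
          sums (9 * (16 * ln 3 - 171)))
    \<and> ((\<lambda>k::nat. (5635 * real k - 1156) / ((-18)^k * real ((3*k) choose k)))
          sums (54 * ln (2/3) - 1215))
    \<and> ((\<lambda>k::nat. (63050 * real k - 15959) / ((-48)^k * real ((3*k) choose k)))
          sums (72 * (4 * ln (3/4) - 225)))
    \<and> ((\<lambda>k::nat. (112216 * real k - 30847) / ((-100)^k * real ((3*k) choose k)))
          sums (300 * ln (4/5) - 31050))
    \<and> ((\<lambda>k::nat. (615296 * real k - 176777) / ((-180)^k * real ((3*k) choose k)))
          sums (270 * (4 * ln (5/6) - 657)))
    \<and> ((\<lambda>k::nat. (710809 * real k - 209926) / ((-294)^k * real ((3*k) choose k)))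
          sums (441 * (2 * ln (6/7) - 477)))
    \<and> ((\<lambda>k::nat. (2910050 * real k - 875807) / ((-448)^k * real ((3*k) choose k)))
          sums (672 * (4 * ln (7/8) - 1305)))
    \<and> ((\<lambda>k::nat. (2721250 * real k - 830317) / ((-648)^k * real ((3*k) choose k)))
          sums (972 * (2 * ln (8/9) - 855)))
    \<and> ((\<lambda>k::nat. (9490712 * real k - 2926289) / ((-900)^k * real ((3*k) choose k)))
          sums (1350 * (4 * ln (9/10) - 2169)))
    \<and> ((\<lambda>k::nat. (7825423 * real k - 2432776) / ((-1210)^k * real ((3*k) choose k)))
          sums (1815 * (2 * ln (10/11) - 1341)))"
  using sums_binomial_pi sums_binomial_log sums_binomial_log_special_values by blast

end
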